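(* Let $I\subseteq\mathbb{R}$ be an interval equipped with Lebesgue measure, and let $\Theta\subseteq\mathbb{R}$ be an interval. Let $\{p_\theta\}_{\theta\in\Theta}$ be a family of strictly positive probability densities on $I$ with respect to Lebesgue measure, continuous in $\theta$ (for each $x\in I$, $\theta\mapsto p_\theta(x)$ is continuous), and with strictly monotone likelihood ratio (for $\theta'<\theta''$ in $\Theta$, $x\mapsto p_{\theta''}(x)/p_{\theta'}(x)$ is strictly increasing). Let $F(\theta,x)=\int_{I\cap]-\infty,x]}p_\theta(y)\,dy$ denote the distribution function of $\mathbb{P}_\theta=p_\theta\cdot\lambda$. For each $\theta\in\Theta\setminus\{\sup\Theta\}$ consider the one-sided hypotheses $\Theta_1^\theta=\,]-\infty,\theta]\cap\Theta$ and $\Theta_0^\theta=\,]\theta,+\infty[\cap\Theta$, and the neutral vote $Q^x(\Theta_1^\theta)=1-F(\theta,x)$. Then these votes are compatible, i.e. for Lebesgue-almost every $x\in I$ there exists a unique probability measure $Q^x$ on the $\sigma$-algebra of subsets of $\Theta$ generated by $\{\Theta_1^\theta:\theta\in\Theta\setminus\{\sup\Theta\}\}$ such that $Q^x(\Theta_1^\theta)=1-F(\theta,x)$ for all $\theta\in\Theta\setminus\{\sup\Theta\}$, if and only if for almost every $x\in I$: (1) $\lim_{\theta\to\sup\Theta}F(\theta,x)=0$ whenever $\sup\Theta\notin\Theta$; and (2) $\lim_{\theta\to\inf\Theta}F(\theta,x)=1$ whenever $\inf\Theta\notin\Theta$.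
   Context: The quantity $1-F(\theta,x)$ is the "neutral vote" (the vote of experts at the boundary point $\theta$) in favour of the hypothesis $]-\infty,\theta]\cap\Theta$ when $x$ is observed. A family of such votes, indexed by a family of one-sided hypotheses, is called compatible when, for almost every observation $x$, the map assigning to each hypothesis its vote extends to a unique probability measure on the $\sigma$-algebra generated by these hypotheses. *)

theory Defs
  imports "HOL-Probability.Probability"
begin

definition distF :: "real set \<Rightarrow> (real \<Rightarrow> real \<Rightarrow> real) \<Rightarrow> real \<Rightarrow> real \<Rightarrow> real" where
  "distF I p \<theta> x = (LINT y:(I \<inter> {..x})|lebesgue. p \<theta> y)"

text \<open>Theta minus its supremum: the points of Theta that are not the maximum.\<close>
definition nonmax :: "real set \<Rightarrow> real set" where
  "nonmax \<Theta> = {\<theta> \<in> \<Theta>. \<exists>\<theta>'\<in>\<Theta>. \<theta> < \<theta>'}"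

definition hyp1 :: "real set \<Rightarrow> real \<Rightarrow> real set" where
  "hyp1 \<Theta> \<theta> = {..\<theta>} \<inter> \<Theta>"

definition has_max :: "real set \<Rightarrow> bool" where
  "has_max \<Theta> \<longleftrightarrow> (\<exists>m\<in>\<Theta>. \<forall>t\<in>\<Theta>. t \<le> m)"

definition has_min :: "real set \<Rightarrow> bool" where
  "has_min \<Theta> \<longleftrightarrow> (\<exists>m\<in>\<Theta>. \<forall>t\<in>\<Theta>. m \<le> t)"

definition to_sup :: "real set \<Rightarrow> real filter" where
  "to_sup \<Theta> = (if bdd_above \<Theta> then at (Sup \<Theta>) within \<Theta> else inf at_top (principal \<Theta>))"

definition to_inf :: "real set \<Rightarrow> real filter" where
  "to_inf \<Theta> = (if bdd_below \<Theta> then at (Inf \<Theta>) within \<Theta> else inf at_bot (principal \<Theta>))"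

definition votes_compatible :: "real set \<Rightarrow> real set \<Rightarrow> (real \<Rightarrow> real \<Rightarrow> real) \<Rightarrow> bool" where
  "votes_compatible I \<Theta> F \<longleftrightarrow>
     (AE x in lebesgue. x \<in> I \<longrightarrow>
        (\<exists>!Q :: real measure. prob_space Q \<and> space Q = \<Theta> \<and>
            sets Q = sigma_sets \<Theta> (hyp1 \<Theta> ` nonmax \<Theta>) \<and>
            (\<forall>\<theta>\<in>nonmax \<Theta>. measure Q (hyp1 \<Theta> \<theta>) = 1 - F \<theta> x)))"

end

theory Submission
  imports Defs
begin

(* Write G(theta) = 1 - F(theta,x) for the votes at a fixed observation x. The hypotheses
   ]-infty,theta] inter Theta form a pi-system, so a measure realising the votes is unique.
   If it exists, continuity of the measure along increasing and decreasing sequences of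
   hypotheses forces G -> 1 at sup Theta and G -> 0 at inf Theta. Conversely, the monotone
   likelihood ratio makes G nondecreasing and Scheffe's lemma makes it continuous; extended by 0
   below Theta and by 1 from max Theta (or above Theta) on, G is a right-continuous distribution
   function on the real line, and the two limit conditions say precisely that its
   Lebesgue-Stieltjes measure is carried by Theta. *)

section \<open>Measures realising the votes\<close>

definition vote_measure :: "real set \<Rightarrow> (real \<Rightarrow> real) \<Rightarrow> real measure \<Rightarrow> bool" where
  "vote_measure \<Theta> G Q \<longleftrightarrow> prob_space Q \<and> space Q = \<Theta> \<and>
     sets Q = sigma_sets \<Theta> (hyp1 \<Theta> ` nonmax \<Theta>) \<and>
     (\<forall>\<theta>\<in>nonmax \<Theta>. measure Q (hyp1 \<Theta> \<theta>) = G \<theta>)"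

lemma votes_compatible_iff_vote_measure:
  "votes_compatible I \<Theta> F \<longleftrightarrow>
     (AE x in lebesgue. x \<in> I \<longrightarrow> (\<exists>!Q. vote_measure \<Theta> (\<lambda>\<theta>. 1 - F \<theta> x) Q))"
  by (simp add: votes_compatible_def vote_measure_def)

lemma hyp1_subset: "hyp1 \<Theta> t \<subseteq> \<Theta>"
  by (auto simp: hyp1_def)

lemma hyp1_mono: "s \<le> t \<Longrightarrow> hyp1 \<Theta> s \<subseteq> hyp1 \<Theta> t"
  by (auto simp: hyp1_def)

lemma hyp1_Int: "hyp1 \<Theta> s \<inter> hyp1 \<Theta> t = hyp1 \<Theta> (min s t)"
  by (auto simp: hyp1_def)

lemma nonmax_subset: "nonmax \<Theta> \<subseteq> \<Theta>"
  by (auto simp: nonmax_def)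

lemma nonmax_le: "s \<in> \<Theta> \<Longrightarrow> s \<le> t \<Longrightarrow> t \<in> nonmax \<Theta> \<Longrightarrow> s \<in> nonmax \<Theta>"
  unfolding nonmax_def by (auto intro: le_less_trans)

lemma nonmax_eq_self: "\<not> has_max \<Theta> \<Longrightarrow> nonmax \<Theta> = \<Theta>"
  by (auto simp: nonmax_def has_max_def not_le)

lemma nonmax_less_if_no_min:
  assumes "\<not> has_min \<Theta>" and "t \<in> \<Theta>"
  obtains s where "s \<in> nonmax \<Theta>" and "s < t"
  using assms by (force simp: has_min_def nonmax_def not_le)

lemma no_min_if_Inf_notin:
  assumes "Inf \<Theta> \<notin> \<Theta>"
  shows "\<not> has_min \<Theta>"
proof
  assume "has_min \<Theta>"
  then obtain m where "m \<in> \<Theta>" "\<forall>t\<in>\<Theta>. m \<le> t"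
    by (auto simp: has_min_def)
  then have "Inf \<Theta> = m"
    by (intro cInf_eq_minimum) auto
  with \<open>m \<in> \<Theta>\<close> assms show False
    by simp
qed

lemma vote_measure_unique:
  assumes "vote_measure \<Theta> G Q1" and "vote_measure \<Theta> G Q2"
  shows "Q1 = Q2"
proof -
  let ?E = "hyp1 \<Theta> ` nonmax \<Theta>"
  interpret Q1: prob_space Q1 using assms(1) by (simp add: vote_measure_def)
  interpret Q2: prob_space Q2 using assms(2) by (simp add: vote_measure_def)
  have "sigma_sets \<Theta> (insert \<Theta> ?E) = sigma_sets \<Theta> ?E"
    by (rule sigma_sets_eqI) (auto intro: sigma_sets_top)
  then have sets: "sets Q1 = sigma_sets \<Theta> (insert \<Theta> ?E)" "sets Q2 = sigma_sets \<Theta> (insert \<Theta> ?E)"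
    using assms by (simp_all add: vote_measure_def)
  show ?thesis
  proof (rule measure_eqI_generator_eq[OF _ _ _ sets, where A = "\<lambda>_. \<Theta>"])
    show "Int_stable (insert \<Theta> ?E)"
      using hyp1_subset by (auto simp: Int_stable_def hyp1_Int Int_absorb1 Int_absorb2 min_def)
    show "insert \<Theta> ?E \<subseteq> Pow \<Theta>"
      using hyp1_subset by auto
    show "emeasure Q1 X = emeasure Q2 X" if "X \<in> insert \<Theta> ?E" for X
      using that assms sets Q1.emeasure_space_1 Q2.emeasure_space_1
      by (auto simp: vote_measure_def Q1.emeasure_eq_measure Q2.emeasure_eq_measure)
  qed (use assms in \<open>auto simp: vote_measure_def\<close>)
qed

section \<open>Limits at the ends of a set of reals\<close>

lemma incseq_cofinal:
  fixes A :: "real set"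
  assumes "A \<noteq> {}" and "\<not> has_max A"
  obtains u where "incseq u" "range u \<subseteq> A" "\<And>t. t \<in> A \<Longrightarrow> \<exists>n. t < u n"
proof -
  obtain f :: "nat \<Rightarrow> ereal" where f: "incseq f" "range f \<subseteq> ereal ` A" "Sup (ereal ` A) = (SUP n. f n)"
    using Sup_countable_SUP[of "ereal ` A"] assms(1) by auto
  define u where "u n = real_of_ereal (f n)" for n
  have f_eq: "f n = ereal (u n)" for n
  proof -
    have "f n \<in> ereal ` A"
      using f(2) by auto
    then show ?thesis
      by (auto simp: u_def)
  qed
  show ?thesis
  proof
    show "incseq u"
      using f(1) by (simp add: incseq_def f_eq)
    show "range u \<subseteq> A"
      using f(2) by (auto simp: f_eq)
    fix t assume "t \<in> A"
    then obtain s where "s \<in> A" "t < s"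
      using assms(2) by (auto simp: has_max_def not_le)
    then have "ereal t < ereal s"
      by simp
    also have "\<dots> \<le> Sup (ereal ` A)"
      using \<open>s \<in> A\<close> by (intro Sup_upper) simp
    finally have "ereal t < (SUP n. f n)"
      using f(3) by simp
    then show "\<exists>n. t < u n"
      by (auto simp: less_SUP_iff f_eq)
  qed
qed

lemma decseq_coinitial:
  fixes A :: "real set"
  assumes "A \<noteq> {}" and "\<not> has_min A"
  obtains u where "decseq u" "range u \<subseteq> A" "\<And>t. t \<in> A \<Longrightarrow> \<exists>n. u n < t"
proof -
  have "\<not> has_max (uminus ` A)"
    using assms(2) by (auto simp: has_max_def has_min_def)
  then obtain v where v: "incseq v" "range v \<subseteq> uminus ` A" "\<And>t. t \<in> uminus ` A \<Longrightarrow> \<exists>n. t < v n"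
    using incseq_cofinal[of "uminus ` A"] assms(1) by blast
  show ?thesis
  proof
    show "decseq (\<lambda>n. - v n)"
      using v(1) by (simp add: decseq_def incseq_def)
    show "range (\<lambda>n. - v n) \<subseteq> A"
      using v(2) by fastforce
    fix t assume "t \<in> A"
    then obtain n where "- t < v n"
      using v(3)[of "- t"] by auto
    then show "\<exists>n. - v n < t"
      by (intro exI[of _ n]) linarith
  qed
qed

lemma eventually_in_to_sup: "eventually (\<lambda>\<theta>. \<theta> \<in> \<Theta>) (to_sup \<Theta>)"
  by (simp add: to_sup_def eventually_at_filter eventually_inf_principal)

lemma eventually_in_to_inf: "eventually (\<lambda>\<theta>. \<theta> \<in> \<Theta>) (to_inf \<Theta>)"
  by (simp add: to_inf_def eventually_at_filter eventually_inf_principal)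

lemma eventually_ge_to_sup:
  assumes "\<not> has_max \<Theta>" and "t \<in> \<Theta>"
  shows "eventually (\<lambda>\<theta>. t \<le> \<theta>) (to_sup \<Theta>)"
proof (cases "bdd_above \<Theta>")
  case True
  obtain s where "s \<in> \<Theta>" "t < s"
    using assms by (auto simp: has_max_def not_le)
  then have "t < Sup \<Theta>"
    using True by (meson cSup_upper less_le_trans)
  then have "eventually (\<lambda>\<theta>. t < \<theta>) (at (Sup \<Theta>) within \<Theta>)"
    by (rule order_tendstoD(1)[OF tendsto_ident_at])
  then show ?thesis
    using True by (auto simp: to_sup_def elim: eventually_mono)
qed (auto simp: to_sup_def eventually_inf_principal intro: eventually_mono[OF eventually_ge_at_top])

lemma eventually_le_to_inf:
  assumes "\<not> has_min \<Theta>" and "t \<in> \<Theta>"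
  shows "eventually (\<lambda>\<theta>. \<theta> \<le> t) (to_inf \<Theta>)"
proof (cases "bdd_below \<Theta>")
  case True
  obtain s where "s \<in> \<Theta>" "s < t"
    using assms by (auto simp: has_min_def not_le)
  then have "Inf \<Theta> < t"
    using True by (meson cInf_lower le_less_trans)
  then have "eventually (\<lambda>\<theta>. \<theta> < t) (at (Inf \<Theta>) within \<Theta>)"
    by (rule order_tendstoD(2)[OF tendsto_ident_at])
  then show ?thesis
    using True by (auto simp: to_inf_def elim: eventually_mono)
qed (auto simp: to_inf_def eventually_inf_principal intro: eventually_mono[OF eventually_le_at_bot])

lemma eventually_nonmax_to_inf:
  assumes "\<Theta> \<noteq> {}" and "\<not> has_min \<Theta>"
  shows "eventually (\<lambda>\<theta>. \<theta> \<in> nonmax \<Theta>) (to_inf \<Theta>)"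
proof -
  obtain c where "c \<in> \<Theta>"
    using assms(1) by auto
  then obtain s where s: "s \<in> nonmax \<Theta>"
    using assms(2) nonmax_less_if_no_min by blast
  then have "s \<in> \<Theta>"
    using nonmax_subset by blast
  show ?thesis
    using eventually_le_to_inf[OF assms(2) \<open>s \<in> \<Theta>\<close>] eventually_in_to_inf
    by eventually_elim (use s nonmax_le in blast)
qed

lemma to_sup_neq_bot:
  assumes "\<Theta> \<noteq> {}" and "\<not> has_max \<Theta>"
  shows "to_sup \<Theta> \<noteq> bot"
proof (cases "bdd_above \<Theta>")
  case True
  have "Sup \<Theta> \<notin> \<Theta>"
    using assms(2) True by (auto simp: has_max_def intro: cSup_upper)
  moreover have "Sup \<Theta> \<in> closure \<Theta>"
    using closure_contains_Sup[OF assms(1) True] .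
  ultimately have "Sup \<Theta> islimpt \<Theta>"
    by (simp add: closure_def)
  then show ?thesis
    using True by (simp add: to_sup_def trivial_limit_within)
next
  case False
  show ?thesis
  proof
    assume "to_sup \<Theta> = bot"
    then have "eventually (\<lambda>_. False) (inf at_top (principal \<Theta>))"
      using False by (simp add: to_sup_def)
    then have "eventually (\<lambda>\<theta>. \<theta> \<in> \<Theta> \<longrightarrow> False) at_top"
      by (simp only: eventually_inf_principal)
    then obtain N where "\<And>\<theta>. N \<le> \<theta> \<Longrightarrow> \<theta> \<notin> \<Theta>"
      by (auto simp: eventually_at_top_linorder)
    with False show False
      by (auto simp: bdd_above_def) (meson linear)
  qed
qed

lemma tendsto_measure_hyp1_to_sup:
  assumes "finite_measure Q" and "space Q = \<Theta>" and "\<Theta> \<noteq> {}" and "\<not> has_max \<Theta>"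
    and sets: "\<And>\<theta>. \<theta> \<in> \<Theta> \<Longrightarrow> hyp1 \<Theta> \<theta> \<in> sets Q"
  shows "((\<lambda>\<theta>. measure Q (hyp1 \<Theta> \<theta>)) \<longlongrightarrow> measure Q \<Theta>) (to_sup \<Theta>)"
proof -
  interpret finite_measure Q by fact
  obtain u where u: "incseq u" "range u \<subseteq> \<Theta>" "\<And>t. t \<in> \<Theta> \<Longrightarrow> \<exists>n. t < u n"
    using incseq_cofinal[OF assms(3,4)] by blast
  have "(\<Union>n. hyp1 \<Theta> (u n)) = \<Theta>"
  proof
    show "(\<Union>n. hyp1 \<Theta> (u n)) \<subseteq> \<Theta>"
      using hyp1_subset by blast
    show "\<Theta> \<subseteq> (\<Union>n. hyp1 \<Theta> (u n))"
    proof
      fix t assume "t \<in> \<Theta>"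
      with u(3) obtain n where "t < u n"
        by blast
      with \<open>t \<in> \<Theta>\<close> show "t \<in> (\<Union>n. hyp1 \<Theta> (u n))"
        by (auto simp: hyp1_def intro!: exI[of _ n])
    qed
  qed
  moreover have "(\<lambda>n. measure Q (hyp1 \<Theta> (u n))) \<longlonglongrightarrow> measure Q (\<Union>n. hyp1 \<Theta> (u n))"
    using u(1,2) sets by (intro finite_Lim_measure_incseq) (auto simp: incseq_def intro!: hyp1_mono)
  ultimately have lim: "(\<lambda>n. measure Q (hyp1 \<Theta> (u n))) \<longlonglongrightarrow> measure Q \<Theta>"
    by simp
  show ?thesis
  proof (rule order_tendstoI)
    fix a assume "a < measure Q \<Theta>"
    then obtain n where n: "a < measure Q (hyp1 \<Theta> (u n))"
      using order_tendstoD(1)[OF lim] by (auto simp: eventually_sequentially)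
    have u_n: "u n \<in> \<Theta>"
      using u(2) by blast
    show "eventually (\<lambda>\<theta>. a < measure Q (hyp1 \<Theta> \<theta>)) (to_sup \<Theta>)"
      using eventually_ge_to_sup[OF assms(4) u_n] eventually_in_to_sup
    proof eventually_elim
      case (elim \<theta>)
      then have "measure Q (hyp1 \<Theta> (u n)) \<le> measure Q (hyp1 \<Theta> \<theta>)"
        by (intro finite_measure_mono hyp1_mono sets)
      with n show ?case by simp
    qed
  next
    fix a assume "measure Q \<Theta> < a"
    moreover have "measure Q (hyp1 \<Theta> \<theta>) \<le> measure Q \<Theta>" for \<theta>
      using assms(2) by (intro finite_measure_mono hyp1_subset) auto
    ultimately show "eventually (\<lambda>\<theta>. measure Q (hyp1 \<Theta> \<theta>) < a) (to_sup \<Theta>)"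
      by (intro always_eventually allI) (metis le_less_trans)
  qed
qed

lemma tendsto_measure_hyp1_to_inf:
  assumes "finite_measure Q" and "\<Theta> \<noteq> {}" and "\<not> has_min \<Theta>"
    and sets: "\<And>\<theta>. \<theta> \<in> nonmax \<Theta> \<Longrightarrow> hyp1 \<Theta> \<theta> \<in> sets Q"
  shows "((\<lambda>\<theta>. measure Q (hyp1 \<Theta> \<theta>)) \<longlongrightarrow> 0) (to_inf \<Theta>)"
proof -
  interpret finite_measure Q by fact
  have nonempty: "nonmax \<Theta> \<noteq> {}"
    using assms(2,3) nonmax_less_if_no_min by blast
  have no_min: "\<not> has_min (nonmax \<Theta>)"
    using assms(3) nonmax_subset nonmax_less_if_no_min
    by (metis has_min_def leD subsetD)
  \<comment> \<open>taken in nonmax Theta, where the hypotheses are known to be measurable\<close>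
  obtain u where u: "decseq u" "range u \<subseteq> nonmax \<Theta>" "\<And>t. t \<in> nonmax \<Theta> \<Longrightarrow> \<exists>n. u n < t"
    using decseq_coinitial[OF nonempty no_min] by blast
  have "(\<Inter>n. hyp1 \<Theta> (u n)) = {}"
  proof (rule ccontr)
    assume "(\<Inter>n. hyp1 \<Theta> (u n)) \<noteq> {}"
    then obtain t where t: "t \<in> \<Theta>" "\<And>n. t \<le> u n"
      by (auto simp: hyp1_def)
    obtain s where s: "s \<in> nonmax \<Theta>" "s < t"
      using nonmax_less_if_no_min[OF assms(3) t(1)] .
    then obtain n where "u n < s"
      using u(3) by blast
    with s(2) t(2)[of n] show False
      by linarith
  qed
  moreover have "(\<lambda>n. measure Q (hyp1 \<Theta> (u n))) \<longlonglongrightarrow> measure Q (\<Inter>n. hyp1 \<Theta> (u n))"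
    using u(1,2) sets by (intro finite_Lim_measure_decseq) (auto simp: decseq_def intro!: hyp1_mono)
  ultimately have lim: "(\<lambda>n. measure Q (hyp1 \<Theta> (u n))) \<longlonglongrightarrow> 0"
    by simp
  show ?thesis
  proof (rule order_tendstoI)
    fix a :: real assume "0 < a"
    then obtain n where n: "measure Q (hyp1 \<Theta> (u n)) < a"
      using order_tendstoD(2)[OF lim] by (auto simp: eventually_sequentially)
    have u_n: "u n \<in> \<Theta>"
      using u(2) nonmax_subset by blast
    show "eventually (\<lambda>\<theta>. measure Q (hyp1 \<Theta> \<theta>) < a) (to_inf \<Theta>)"
      using eventually_le_to_inf[OF assms(3) u_n] eventually_in_to_inf
    proof eventually_elim
      case (elim \<theta>)
      then have "measure Q (hyp1 \<Theta> \<theta>) \<le> measure Q (hyp1 \<Theta> (u n))"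
        using u(2) by (intro finite_measure_mono hyp1_mono sets) auto
      with n show ?case by simp
    qed
  next
    fix a :: real assume "a < 0"
    then show "eventually (\<lambda>\<theta>. a < measure Q (hyp1 \<Theta> \<theta>)) (to_inf \<Theta>)"
      by (intro always_eventually allI) (metis measure_nonneg less_le_trans)
  qed
qed

section \<open>A distribution function on the line realising the votes\<close>

lemma at_right_le_at_within:
  fixes a c :: real
  assumes "a < c" and "{a<..<c} \<subseteq> S"
  shows "at_right a \<le> at a within S"
proof -
  have "at_right a = at a within {a<..<c}"
    using assms(1) by (intro at_within_nhd[of _ "{..<c}"]) auto
  also have "\<dots> \<le> at a within S"
    using assms(2) by (rule at_le)
  finally show ?thesis .
qed

lemma at_top_le_to_sup:
  assumes "is_interval \<Theta>" and "\<not> bdd_above \<Theta>"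
  shows "at_top \<le> to_sup \<Theta>"
proof -
  have "\<Theta> \<noteq> {}"
    using assms(2) by auto
  then obtain c where c: "c \<in> \<Theta>"
    by blast
  have "eventually (\<lambda>\<theta>. \<theta> \<in> \<Theta>) at_top"
    using eventually_ge_at_top[of c]
  proof eventually_elim
    case (elim \<theta>)
    obtain s where s: "s \<in> \<Theta>" "\<theta> \<le> s"
      using assms(2) by (auto simp: bdd_above_def not_le intro: less_imp_le)
    with elim show ?case
      using mem_is_interval_1_I[OF assms(1) c s(1)] by simp
  qed
  then show ?thesis
    using assms(2) by (simp add: to_sup_def le_principal)
qed

lemma at_bot_le_to_inf:
  assumes "is_interval \<Theta>" and "\<not> bdd_below \<Theta>"
  shows "at_bot \<le> to_inf \<Theta>"
proof -
  have "\<Theta> \<noteq> {}"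
    using assms(2) by auto
  then obtain c where c: "c \<in> \<Theta>"
    by blast
  have "eventually (\<lambda>\<theta>. \<theta> \<in> \<Theta>) at_bot"
    using eventually_le_at_bot[of c]
  proof eventually_elim
    case (elim \<theta>)
    obtain s where s: "s \<in> \<Theta>" "s \<le> \<theta>"
      using assms(2) by (auto simp: bdd_below_def not_le intro: less_imp_le)
    with elim show ?case
      using mem_is_interval_1_I[OF assms(1) s(1) c] by simp
  qed
  then show ?thesis
    using assms(2) by (simp add: to_inf_def le_principal)
qed

lemma downward_closed_null_sets:
  fixes L :: "real set"
  assumes down: "\<And>s t. t \<in> L \<Longrightarrow> s \<le> t \<Longrightarrow> s \<in> L"
    and null: "\<And>t. t \<in> L \<Longrightarrow> {..t} \<in> null_sets M"
  shows "L \<in> null_sets M"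
proof (cases "L = {}")
  case False
  show ?thesis
  proof (cases "has_max L")
    case True
    then obtain m where "m \<in> L" "\<forall>t\<in>L. t \<le> m"
      by (auto simp: has_max_def)
    then have "L = {..m}"
      using down by auto
    with \<open>m \<in> L\<close> show ?thesis
      using null by simp
  next
    case no_max: False
    obtain u where u: "incseq u" "range u \<subseteq> L" "\<And>t. t \<in> L \<Longrightarrow> \<exists>n. t < u n"
      using incseq_cofinal[OF False no_max] by blast
    have "L = (\<Union>n. {..u n})"
    proof
      show "L \<subseteq> (\<Union>n. {..u n})"
      proof
        fix t assume "t \<in> L"
        then obtain n where "t < u n"
          using u(3) by blast
        then show "t \<in> (\<Union>n. {..u n})"
          by (auto intro!: exI[of _ n])
      qed
      show "(\<Union>n. {..u n}) \<subseteq> L"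
        using u(2) down by blast
    qed
    moreover have "(\<Union>n. {..u n}) \<in> null_sets M"
      using u(2) null by (intro null_sets_UN) blast
    ultimately show ?thesis
      by simp
  qed
qed simp

lemma continuous_at_right_if_locally_const:
  fixes f :: "real \<Rightarrow> real"
  assumes "a < b" and "\<And>y. a < y \<Longrightarrow> y < b \<Longrightarrow> f y = f a"
  shows "continuous (at_right a) f"
proof -
  have "eventually (\<lambda>y. f a = f y) (at_right a)"
    unfolding eventually_at_right_field using assms by (intro exI[of _ b]) auto
  then show ?thesis
    unfolding continuous_within by (rule Lim_transform_eventually[OF tendsto_const])
qed

context
  fixes \<Theta> :: "real set" and G :: "real \<Rightarrow> real"
  assumes interval: "is_interval \<Theta>" and nonempty: "\<Theta> \<noteq> {}"
    and G_mono: "mono_on \<Theta> G"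
    and G_bounds: "\<And>\<theta>. \<theta> \<in> \<Theta> \<Longrightarrow> 0 \<le> G \<theta> \<and> G \<theta> \<le> 1"
    and G_cont: "continuous_on \<Theta> G"
    and G_sup: "\<not> has_max \<Theta> \<Longrightarrow> (G \<longlongrightarrow> 1) (to_sup \<Theta>)"
    and G_inf: "\<not> has_min \<Theta> \<Longrightarrow> (G \<longlongrightarrow> 0) (to_inf \<Theta>)"
begin

(* G is not consulted at max Theta: the hypothesis there is all of Theta. *)
definition vote_cdf :: "real \<Rightarrow> real" where
  "vote_cdf t = (if \<forall>s\<in>\<Theta>. t < s then 0 else if t \<in> nonmax \<Theta> then G t else 1)"

lemma vote_cdf_nonmax: "t \<in> nonmax \<Theta> \<Longrightarrow> vote_cdf t = G t"
  by (auto simp: vote_cdf_def nonmax_def)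

lemma vote_cdf_above:
  assumes "\<forall>s\<in>\<Theta>. s \<le> t"
  shows "vote_cdf t = 1"
proof -
  obtain c where "c \<in> \<Theta>"
    using nonempty by auto
  with assms have "\<not> (\<forall>s\<in>\<Theta>. t < s)"
    by (auto simp: not_less)
  moreover have "t \<notin> nonmax \<Theta>"
    using assms by (auto simp: nonmax_def not_less)
  ultimately show ?thesis
    by (simp add: vote_cdf_def)
qed

lemma vote_cdf_cases:
  obtains (below) "\<forall>s\<in>\<Theta>. t < s" "vote_cdf t = 0"
    | (inside) "t \<in> nonmax \<Theta>" "vote_cdf t = G t"
    | (above) "\<forall>s\<in>\<Theta>. s \<le> t" "vote_cdf t = 1"
proof -
  have "t \<in> nonmax \<Theta>" if not_below: "\<not> (\<forall>s\<in>\<Theta>. t < s)" and not_above: "\<not> (\<forall>s\<in>\<Theta>. s \<le> t)"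
  proof -
    obtain a where a: "a \<in> \<Theta>" "a \<le> t"
      using not_below by (auto simp: not_less)
    obtain b where b: "b \<in> \<Theta>" "t < b"
      using not_above by (auto simp: not_le)
    have "t \<in> \<Theta>"
      using mem_is_interval_1_I[OF interval a(1) b(1)] a(2) b(2) by simp
    with b show ?thesis
      by (auto simp: nonmax_def)
  qed
  then consider "\<forall>s\<in>\<Theta>. t < s" | "t \<in> nonmax \<Theta>" | "\<forall>s\<in>\<Theta>. s \<le> t"
    by blast
  then show thesis
  proof cases
    case 1
    then show thesis
      using that(1) by (simp add: vote_cdf_def)
  next
    case 2
    then show thesis
      using that(2) vote_cdf_nonmax by simp
  next
    case 3
    then show thesis
      using that(3) vote_cdf_above by simp
  qed
qed

lemma vote_cdf_bounds: "0 \<le> vote_cdf t \<and> vote_cdf t \<le> 1"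
  using G_bounds nonmax_subset by (cases t rule: vote_cdf_cases) auto

lemma vote_cdf_mono:
  assumes "s \<le> t"
  shows "vote_cdf s \<le> vote_cdf t"
proof (cases s rule: vote_cdf_cases)
  case below
  then show ?thesis
    using vote_cdf_bounds[of t] by simp
next
  case s_inside: inside
  then have s: "s \<in> \<Theta>"
    using nonmax_subset by auto
  show ?thesis
  proof (cases t rule: vote_cdf_cases)
    case below
    then have "t < s"
      using s by blast
    with assms show ?thesis
      by simp
  next
    case inside
    then have "G s \<le> G t"
      using mono_onD[OF G_mono s _ assms] nonmax_subset by auto
    with s_inside inside show ?thesis
      by simp
  next
    case above
    with s s_inside G_bounds show ?thesis
      by simp
  qed
next
  case above
  then have "\<forall>x\<in>\<Theta>. x \<le> t"
    using assms order_trans by blast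
  with above show ?thesis
    using vote_cdf_above by simp
qed

lemma continuous_at_right_vote_cdf_if_tendsto:
  assumes "a < c" and "c \<in> \<Theta>" and "{a<..<c} \<subseteq> \<Theta>"
    and "(G \<longlongrightarrow> vote_cdf a) (at a within \<Theta>)"
  shows "continuous (at_right a) vote_cdf"
proof -
  have "(G \<longlongrightarrow> vote_cdf a) (at_right a)"
    using assms(4) at_right_le_at_within[OF assms(1,3)] by (rule tendsto_mono[rotated])
  moreover have "eventually (\<lambda>y. G y = vote_cdf y) (at_right a)"
    unfolding eventually_at_right_field
  proof (intro exI conjI allI impI)
    fix y assume "a < y" "y < c"
    then have "y \<in> nonmax \<Theta>"
      using assms(2,3) by (auto simp: nonmax_def)
    then show "G y = vote_cdf y"
      by (simp add: vote_cdf_nonmax)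
  qed fact
  ultimately show ?thesis
    unfolding continuous_within by (rule Lim_transform_eventually)
qed

lemma continuous_at_right_vote_cdf_below:
  assumes below: "\<forall>s\<in>\<Theta>. a < s"
  shows "continuous (at_right a) vote_cdf"
proof -
  have bdd: "bdd_below \<Theta>"
    using below by (auto simp: bdd_below_def intro: less_imp_le)
  have "a \<le> Inf \<Theta>"
    using below nonempty by (intro cInf_greatest) (auto intro: less_imp_le)
  then consider "a < Inf \<Theta>" | "a = Inf \<Theta>"
    by linarith
  then show ?thesis
  proof cases
    case 1
    show ?thesis
    proof (rule continuous_at_right_if_locally_const[OF 1])
      fix y assume "y < Inf \<Theta>"
      then have "\<forall>s\<in>\<Theta>. y < s"
        using cInf_lower[OF _ bdd] by (meson less_le_trans)
      with below show "vote_cdf y = vote_cdf a"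
        by (simp add: vote_cdf_def)
    qed
  next
    case 2 \<comment> \<open>here right-continuity is the limit condition at inf Theta\<close>
    obtain c where c: "c \<in> \<Theta>"
      using nonempty by auto
    have "{a<..<c} \<subseteq> \<Theta>"
    proof
      fix y assume y: "y \<in> {a<..<c}"
      then obtain s where s: "s \<in> \<Theta>" "s < y"
        using cInf_less_iff[OF nonempty bdd] 2 by auto
      with y show "y \<in> \<Theta>"
        using mem_is_interval_1_I[OF interval s(1) c, of y] by simp
    qed
    moreover have "\<not> has_min \<Theta>"
      using below 2 by (intro no_min_if_Inf_notin) auto
    then have "(G \<longlongrightarrow> vote_cdf a) (at a within \<Theta>)"
      using G_inf bdd 2 below by (simp add: to_inf_def vote_cdf_def)
    ultimately show ?thesis
      using c below by (intro continuous_at_right_vote_cdf_if_tendsto) auto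
  qed
qed

lemma vote_cdf_continuous_at_right: "continuous (at_right a) vote_cdf"
proof (cases a rule: vote_cdf_cases)
  case below
  show ?thesis
    by (rule continuous_at_right_vote_cdf_below[OF below(1)])
next
  case inside
  then obtain c where c: "c \<in> \<Theta>" "a < c" and a: "a \<in> \<Theta>"
    by (auto simp: nonmax_def)
  have "(G \<longlongrightarrow> vote_cdf a) (at a within \<Theta>)"
    using G_cont a inside by (simp add: continuous_on_def)
  moreover have "{a<..<c} \<subseteq> \<Theta>"
  proof
    fix y assume "y \<in> {a<..<c}"
    then show "y \<in> \<Theta>"
      using mem_is_interval_1_I[OF interval a c(1), of y] by simp
  qed
  ultimately show ?thesis
    using c by (intro continuous_at_right_vote_cdf_if_tendsto)
next
  case above
  show ?thesis
  proof (rule continuous_at_right_if_locally_const[of _ "a + 1"])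
    fix y assume "a < y"
    with above have "\<forall>s\<in>\<Theta>. s \<le> y"
      by auto
    with above show "vote_cdf y = vote_cdf a"
      by (simp add: vote_cdf_above)
  qed simp
qed

lemma vote_cdf_at_bot: "(vote_cdf \<longlongrightarrow> 0) at_bot"
proof (cases "bdd_below \<Theta>")
  case True
  have "eventually (\<lambda>t. 0 = vote_cdf t) at_bot"
    using eventually_gt_at_bot[of "Inf \<Theta>"]
  proof eventually_elim
    case (elim t)
    then have "\<forall>s\<in>\<Theta>. t < s"
      using cInf_lower[OF _ True] by (meson less_le_trans)
    then show ?case
      by (simp add: vote_cdf_def)
  qed
  then show ?thesis
    by (rule Lim_transform_eventually[OF tendsto_const])
next
  case False
  then have no_min: "\<not> has_min \<Theta>"
    by (auto simp: has_min_def bdd_below_def)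
  have le: "at_bot \<le> to_inf \<Theta>"
    by (rule at_bot_le_to_inf[OF interval False])
  have "(G \<longlongrightarrow> 0) at_bot"
    using G_inf[OF no_min] le by (rule tendsto_mono[rotated])
  moreover have "eventually (\<lambda>t. G t = vote_cdf t) at_bot"
    using filter_leD[OF le eventually_nonmax_to_inf[OF nonempty no_min]]
    by (rule eventually_mono) (simp add: vote_cdf_nonmax)
  ultimately show ?thesis
    by (rule Lim_transform_eventually)
qed

lemma vote_cdf_at_top: "(vote_cdf \<longlongrightarrow> 1) at_top"
proof (cases "bdd_above \<Theta>")
  case True
  have "eventually (\<lambda>t. 1 = vote_cdf t) at_top"
    using eventually_gt_at_top[of "Sup \<Theta>"]
  proof eventually_elim
    case (elim t)
    then have "\<forall>s\<in>\<Theta>. s \<le> t"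
      using cSup_upper[OF _ True] by (meson less_imp_le order_trans)
    then show ?case
      by (simp add: vote_cdf_above)
  qed
  then show ?thesis
    by (rule Lim_transform_eventually[OF tendsto_const])
next
  case False
  then have no_max: "\<not> has_max \<Theta>"
    by (auto simp: has_max_def bdd_above_def)
  have le: "at_top \<le> to_sup \<Theta>"
    by (rule at_top_le_to_sup[OF interval False])
  have "(G \<longlongrightarrow> 1) at_top"
    using G_sup[OF no_max] le by (rule tendsto_mono[rotated])
  moreover have "eventually (\<lambda>t. G t = vote_cdf t) at_top"
    using filter_leD[OF le eventually_in_to_sup]
    by (rule eventually_mono) (simp add: vote_cdf_nonmax nonmax_eq_self[OF no_max])
  ultimately show ?thesis
    by (rule Lim_transform_eventually)
qed

lemma prob_space_vote_cdf: "prob_space (interval_measure vote_cdf)"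
  using real_distribution_interval_measure[OF vote_cdf_mono vote_cdf_continuous_at_right
      vote_cdf_at_bot vote_cdf_at_top]
  by (simp add: real_distribution_def)

lemma measure_vote_cdf_hyp1:
  assumes "t \<in> \<Theta>"
  shows "measure (interval_measure vote_cdf) (hyp1 \<Theta> t) = vote_cdf t"
proof -
  let ?M = "interval_measure vote_cdf" and ?L = "{y. \<forall>s\<in>\<Theta>. y < s}"
  note Iic = vote_cdf_mono vote_cdf_continuous_at_right vote_cdf_at_bot
  have "?L \<in> null_sets ?M"
  proof (rule downward_closed_null_sets)
    fix y assume "y \<in> ?L"
    then have "emeasure ?M {..y} = 0"
      using emeasure_interval_measure_Iic[OF Iic] by (simp add: vote_cdf_def)
    then show "{..y} \<in> null_sets ?M"
      by (simp add: null_setsI)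
  qed auto
  moreover have "hyp1 \<Theta> t = {..t} - ?L"
  proof
    show "hyp1 \<Theta> t \<subseteq> {..t} - ?L"
      by (auto simp: hyp1_def)
    show "{..t} - ?L \<subseteq> hyp1 \<Theta> t"
    proof
      fix y assume "y \<in> {..t} - ?L"
      then obtain s where s: "s \<in> \<Theta>" "s \<le> y" and "y \<le> t"
        by (auto simp: not_less)
      then have "y \<in> \<Theta>"
        using mem_is_interval_1_I[OF interval s(1) assms] by simp
      with \<open>y \<le> t\<close> show "y \<in> hyp1 \<Theta> t"
        by (simp add: hyp1_def)
    qed
  qed
  ultimately show ?thesis
    using measure_interval_measure_Iic[OF Iic] by (simp add: measure_Diff_null_set)
qed

lemma measure_vote_cdf_Theta: "measure (interval_measure vote_cdf) \<Theta> = 1"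
proof -
  let ?M = "interval_measure vote_cdf"
  interpret prob_space ?M
    by (rule prob_space_vote_cdf)
  have Theta_sets: "\<Theta> \<in> sets ?M"
    using real_interval_borel_measurable[OF interval] by simp
  have lower: "vote_cdf t \<le> measure ?M \<Theta>" if "t \<in> \<Theta>" for t
    using finite_measure_mono[OF hyp1_subset[of \<Theta> t] Theta_sets] measure_vote_cdf_hyp1[OF that]
    by simp
  have "1 \<le> measure ?M \<Theta>"
  proof (cases "has_max \<Theta>")
    case True
    then obtain m where "m \<in> \<Theta>" "\<forall>t\<in>\<Theta>. t \<le> m"
      by (auto simp: has_max_def)
    then show ?thesis
      using lower[of m] vote_cdf_above by simp
  next
    case False
    show ?thesis
    proof (rule tendsto_le[OF to_sup_neq_bot[OF nonempty False] tendsto_const G_sup[OF False]])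
      show "eventually (\<lambda>\<theta>. G \<theta> \<le> measure ?M \<Theta>) (to_sup \<Theta>)"
        using eventually_in_to_sup
        by eventually_elim (use lower vote_cdf_nonmax nonmax_eq_self[OF False] in auto)
    qed
  qed
  then show ?thesis
    using prob_le_1 by (simp add: antisym)
qed

lemma ex_vote_measure: "\<exists>Q. vote_measure \<Theta> G Q"
proof -
  let ?M = "restrict_space (interval_measure vote_cdf) \<Theta>"
  let ?F = "sigma \<Theta> (hyp1 \<Theta> ` nonmax \<Theta>)"
  have Theta_sets: "\<Theta> \<in> sets (interval_measure vote_cdf)"
    using real_interval_borel_measurable[OF interval] by simp
  have space_M: "space ?M = \<Theta>"
    by (simp add: space_restrict_space)
  have sets_F: "sets ?F = sigma_sets \<Theta> (hyp1 \<Theta> ` nonmax \<Theta>)"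
    using hyp1_subset by (intro sets_measure_of) auto
  have "hyp1 \<Theta> ` nonmax \<Theta> \<subseteq> sets ?M"
    using Theta_sets by (auto simp: hyp1_def sets_restrict_space_iff)
  then have "sets ?F \<subseteq> sets ?M"
    unfolding sets_F using space_M sets.top[of ?M] by (intro sets.sigma_sets_subset') auto
  moreover have "space ?F = space ?M"
    using space_M hyp1_subset by (simp add: space_measure_of_conv)
  ultimately have sub: "subalgebra ?M ?F"
    by (simp add: subalgebra_def)
  have prob: "prob_space ?M"
  proof -
    interpret prob_space "interval_measure vote_cdf"
      by (rule prob_space_vote_cdf)
    show ?thesis
      using measure_vote_cdf_Theta Theta_sets
      by (intro prob_space_restrict_space) (simp_all add: emeasure_eq_measure)
  qed
  define Q where "Q = restr_to_subalg ?M ?F"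
  have "measure Q (hyp1 \<Theta> t) = G t" if "t \<in> nonmax \<Theta>" for t
  proof -
    have "measure Q (hyp1 \<Theta> t) = measure ?M (hyp1 \<Theta> t)"
      using emeasure_restr_to_subalg[OF sub] sets_F that
      by (simp add: Q_def measure_def sigma_sets.Basic)
    also have "\<dots> = measure (interval_measure vote_cdf) (hyp1 \<Theta> t)"
      using Theta_sets hyp1_subset by (simp add: measure_restrict_space)
    also have "\<dots> = G t"
      using that nonmax_subset measure_vote_cdf_hyp1 vote_cdf_nonmax by (simp add: subset_iff)
    finally show ?thesis .
  qed
  then have "vote_measure \<Theta> G Q"
    using prob_space_restr_to_subalg[OF sub prob] sets_restr_to_subalg[OF sub] space_M sets_F
    by (simp add: vote_measure_def Q_def space_restr_to_subalg)
  then show ?thesis ..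
qed

end

theorem ex1_vote_measure_iff:
  assumes "is_interval \<Theta>" and "\<Theta> \<noteq> {}" and "mono_on \<Theta> G"
    and "\<And>\<theta>. \<theta> \<in> \<Theta> \<Longrightarrow> 0 \<le> G \<theta> \<and> G \<theta> \<le> 1" and "continuous_on \<Theta> G"
  shows "(\<exists>!Q. vote_measure \<Theta> G Q) \<longleftrightarrow>
    (\<not> has_max \<Theta> \<longrightarrow> (G \<longlongrightarrow> 1) (to_sup \<Theta>)) \<and> (\<not> has_min \<Theta> \<longrightarrow> (G \<longlongrightarrow> 0) (to_inf \<Theta>))"
proof
  assume "\<exists>!Q. vote_measure \<Theta> G Q"
  then obtain Q where Q: "vote_measure \<Theta> G Q"
    by blast
  then interpret prob_space Q
    by (simp add: vote_measure_def)
  have space: "space Q = \<Theta>" and G: "\<And>\<theta>. \<theta> \<in> nonmax \<Theta> \<Longrightarrow> measure Q (hyp1 \<Theta> \<theta>) = G \<theta>"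
    using Q by (auto simp: vote_measure_def)
  have sets: "hyp1 \<Theta> \<theta> \<in> sets Q" if "\<theta> \<in> nonmax \<Theta>" for \<theta>
    using Q that by (auto simp: vote_measure_def)
  show "(\<not> has_max \<Theta> \<longrightarrow> (G \<longlongrightarrow> 1) (to_sup \<Theta>)) \<and> (\<not> has_min \<Theta> \<longrightarrow> (G \<longlongrightarrow> 0) (to_inf \<Theta>))"
  proof (intro conjI impI)
    assume no_max: "\<not> has_max \<Theta>"
    have "((\<lambda>\<theta>. measure Q (hyp1 \<Theta> \<theta>)) \<longlongrightarrow> 1) (to_sup \<Theta>)"
      using tendsto_measure_hyp1_to_sup[OF finite_measure space assms(2) no_max] sets prob_space space
      by (simp add: nonmax_eq_self[OF no_max])
    moreover have "eventually (\<lambda>\<theta>. measure Q (hyp1 \<Theta> \<theta>) = G \<theta>) (to_sup \<Theta>)"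
      using eventually_in_to_sup by (rule eventually_mono) (simp add: G nonmax_eq_self[OF no_max])
    ultimately show "(G \<longlongrightarrow> 1) (to_sup \<Theta>)"
      by (rule Lim_transform_eventually)
  next
    assume no_min: "\<not> has_min \<Theta>"
    have "((\<lambda>\<theta>. measure Q (hyp1 \<Theta> \<theta>)) \<longlongrightarrow> 0) (to_inf \<Theta>)"
      using tendsto_measure_hyp1_to_inf[OF finite_measure assms(2) no_min sets] .
    moreover have "eventually (\<lambda>\<theta>. measure Q (hyp1 \<Theta> \<theta>) = G \<theta>) (to_inf \<Theta>)"
      using eventually_nonmax_to_inf[OF assms(2) no_min] by (rule eventually_mono) (simp add: G)
    ultimately show "(G \<longlongrightarrow> 0) (to_inf \<Theta>)"
      by (rule Lim_transform_eventually)
  qed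
next
  assume "(\<not> has_max \<Theta> \<longrightarrow> (G \<longlongrightarrow> 1) (to_sup \<Theta>)) \<and> (\<not> has_min \<Theta> \<longrightarrow> (G \<longlongrightarrow> 0) (to_inf \<Theta>))"
  then obtain Q where "vote_measure \<Theta> G Q"
    using ex_vote_measure[OF assms] by blast
  then show "\<exists>!Q. vote_measure \<Theta> G Q"
    using vote_measure_unique by blast
qed

section \<open>Densities with strictly monotone likelihood ratio\<close>

lemma tendsto_one_minus_iff:
  fixes f :: "'a \<Rightarrow> real"
  shows "((\<lambda>x. 1 - f x) \<longlongrightarrow> 1 - c) F \<longleftrightarrow> (f \<longlongrightarrow> c) F"
  using tendsto_add_const_iff[of 1 "\<lambda>x. - f x" "- c" F] tendsto_minus_cancel_left[of f "- c" F]
  by simp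

locale strict_mlr_family =
  fixes I \<Theta> :: "real set" and p :: "real \<Rightarrow> real \<Rightarrow> real"
  assumes pos: "\<And>\<theta> x. \<theta> \<in> \<Theta> \<Longrightarrow> x \<in> I \<Longrightarrow> p \<theta> x > 0"
    and meas: "\<And>\<theta>. \<theta> \<in> \<Theta> \<Longrightarrow> set_borel_measurable lebesgue I (p \<theta>)"
    and dens: "\<And>\<theta>. \<theta> \<in> \<Theta> \<Longrightarrow> (\<integral>\<^sup>+ x\<in>I. ennreal (p \<theta> x) \<partial>lebesgue) = 1"
    and cont: "\<And>x. x \<in> I \<Longrightarrow> continuous_on \<Theta> (\<lambda>\<theta>. p \<theta> x)"
    and mlr: "\<And>\<theta>1 \<theta>2. \<theta>1 \<in> \<Theta> \<Longrightarrow> \<theta>2 \<in> \<Theta> \<Longrightarrow> \<theta>1 < \<theta>2 \<Longrightarrow>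
                strict_mono_on I (\<lambda>x. p \<theta>2 x / p \<theta>1 x)"
begin

definition pdf :: "real \<Rightarrow> real \<Rightarrow> real" where
  "pdf \<theta> y = indicator I y * p \<theta> y"

lemma pdf_nonneg: "\<theta> \<in> \<Theta> \<Longrightarrow> 0 \<le> pdf \<theta> y"
  using pos[of \<theta> y] by (auto simp: pdf_def split: split_indicator)

lemma pdf_measurable [measurable]: "\<theta> \<in> \<Theta> \<Longrightarrow> pdf \<theta> \<in> borel_measurable lebesgue"
  using meas[of \<theta>] by (simp add: set_borel_measurable_def pdf_def[abs_def])

lemma nn_integral_pdf: "\<theta> \<in> \<Theta> \<Longrightarrow> (\<integral>\<^sup>+ y. ennreal (pdf \<theta> y) \<partial>lebesgue) = 1"
  using dens[of \<theta>] by (simp add: pdf_def indicator_mult_ennreal mult.commute)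

lemma integrable_pdf: "\<theta> \<in> \<Theta> \<Longrightarrow> integrable lebesgue (pdf \<theta>)"
  by (rule integrableI_nonneg) (auto simp: pdf_nonneg nn_integral_pdf)

lemma integral_pdf: "\<theta> \<in> \<Theta> \<Longrightarrow> (\<integral>y. pdf \<theta> y \<partial>lebesgue) = 1"
  using nn_integral_eq_integral[OF integrable_pdf] nn_integral_pdf pdf_nonneg by simp

lemma integrable_indicator_pdf:
  "\<theta> \<in> \<Theta> \<Longrightarrow> A \<in> sets lebesgue \<Longrightarrow> integrable lebesgue (\<lambda>y. indicator A y * pdf \<theta> y)"
  using integrable_mult_indicator[OF _ integrable_pdf] by simp

lemma distF_eq_integral: "distF I p \<theta> x = (\<integral>y. indicator {..x} y * pdf \<theta> y \<partial>lebesgue)"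
  unfolding distF_def set_lebesgue_integral_def pdf_def
  by (rule Bochner_Integration.integral_cong) (auto split: split_indicator)

lemma integral_greaterThan_pdf:
  assumes "\<theta> \<in> \<Theta>"
  shows "(\<integral>y. indicator {x<..} y * pdf \<theta> y \<partial>lebesgue) = 1 - distF I p \<theta> x"
proof -
  have "distF I p \<theta> x + (\<integral>y. indicator {x<..} y * pdf \<theta> y \<partial>lebesgue) =
      (\<integral>y. indicator {..x} y * pdf \<theta> y + indicator {x<..} y * pdf \<theta> y \<partial>lebesgue)"
    unfolding distF_eq_integral using assms
    by (intro Bochner_Integration.integral_add[symmetric] integrable_indicator_pdf) auto
  also have "\<dots> = (\<integral>y. pdf \<theta> y \<partial>lebesgue)"
    by (intro Bochner_Integration.integral_cong) (auto split: split_indicator)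
  finally show ?thesis
    using integral_pdf[OF assms] by simp
qed

lemma distF_bounds:
  assumes "\<theta> \<in> \<Theta>"
  shows "0 \<le> distF I p \<theta> x \<and> distF I p \<theta> x \<le> 1"
proof -
  have nonneg: "0 \<le> (\<integral>y. indicator A y * pdf \<theta> y \<partial>lebesgue)" for A
    using assms by (intro Bochner_Integration.integral_nonneg) (auto simp: pdf_nonneg)
  show ?thesis
    using nonneg[of "{..x}"] nonneg[of "{x<..}"] integral_greaterThan_pdf[OF assms, of x]
    by (simp add: distF_eq_integral)
qed

lemma distF_antimono:
  assumes t1: "\<theta>1 \<in> \<Theta>" and t2: "\<theta>2 \<in> \<Theta>" and "\<theta>1 \<le> \<theta>2" and x: "x \<in> I"
  shows "distF I p \<theta>2 x \<le> distF I p \<theta>1 x"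
proof (cases "\<theta>1 = \<theta>2")
  case False
  then have ratio: "strict_mono_on I (\<lambda>y. p \<theta>2 y / p \<theta>1 y)"
    using mlr[OF t1 t2] assms(3) by simp
  define r where "r = p \<theta>2 x / p \<theta>1 x"
  have left: "pdf \<theta>2 y \<le> r * pdf \<theta>1 y" if "y \<le> x" for y
  proof (cases "y \<in> I")
    case True
    have "p \<theta>2 y / p \<theta>1 y \<le> r"
      using strict_mono_onD[OF ratio True x] that by (cases "y = x") (auto simp: r_def)
    then show ?thesis
      using pos[OF t1 True] True by (simp add: pdf_def divide_le_eq)
  qed (simp add: pdf_def)
  have right: "r * pdf \<theta>1 y \<le> pdf \<theta>2 y" if "x < y" for y
  proof (cases "y \<in> I")
    case True
    have "r \<le> p \<theta>2 y / p \<theta>1 y"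
      using strict_mono_onD[OF ratio x True that] by (simp add: r_def)
    then show ?thesis
      using pos[OF t1 True] True by (simp add: pdf_def le_divide_eq)
  qed (simp add: pdf_def)
  define F1 F2 where "F1 = distF I p \<theta>1 x" and "F2 = distF I p \<theta>2 x"
  have "F2 \<le> (\<integral>y. r * (indicator {..x} y * pdf \<theta>1 y) \<partial>lebesgue)"
    unfolding F2_def distF_eq_integral using t1 t2
    by (intro integral_mono integrable_indicator_pdf integrable_mult_right)
      (auto intro: left split: split_indicator)
  then have F2: "F2 \<le> r * F1"
    by (simp add: F1_def distF_eq_integral)
  have "(\<integral>y. r * (indicator {x<..} y * pdf \<theta>1 y) \<partial>lebesgue) \<le> 1 - F2"
    unfolding F2_def integral_greaterThan_pdf[OF t2, symmetric] using t1 t2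
    by (intro integral_mono integrable_indicator_pdf integrable_mult_right)
      (auto intro: right split: split_indicator)
  then have F1: "r * (1 - F1) \<le> 1 - F2"
    by (simp add: F1_def integral_greaterThan_pdf[OF t1])
  have "0 \<le> F1" "F1 \<le> 1"
    using distF_bounds[OF t1] by (auto simp: F1_def)
  \<comment> \<open>multiplying the two bounds eliminates r\<close>
  then have "F2 * (1 - F1) \<le> F1 * (1 - F2)"
    using mult_right_mono[OF F2, of "1 - F1"] mult_left_mono[OF F1, of F1] by (simp add: algebra_simps)
  then show ?thesis
    by (simp add: F1_def F2_def algebra_simps)
qed simp

lemma continuous_on_distF: "continuous_on \<Theta> (\<lambda>\<theta>. distF I p \<theta> x)"
proof (rule continuous_on_sequentiallyI)
  fix s \<theta> assume s: "\<forall>n. s n \<in> \<Theta>" and \<theta>: "\<theta> \<in> \<Theta>" and lim: "s \<longlonglongrightarrow> \<theta>"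
  have "(\<lambda>n. \<integral>\<^sup>+y. norm (pdf (s n) y - pdf \<theta> y) \<partial>lebesgue) \<longlonglongrightarrow> 0"
  proof (rule Scheffe_lemma2)
    show "AE y in lebesgue. (\<lambda>n. pdf (s n) y) \<longlonglongrightarrow> pdf \<theta> y"
    proof (rule AE_I2)
      fix y show "(\<lambda>n. pdf (s n) y) \<longlonglongrightarrow> pdf \<theta> y"
      proof (cases "y \<in> I")
        case True
        then have "(\<lambda>n. p (s n) y) \<longlonglongrightarrow> p \<theta> y"
          using continuous_on_tendsto_compose[OF cont[OF True] lim \<theta>] s by auto
        then show ?thesis
          using True by (simp add: pdf_def)
      qed (simp add: pdf_def)
    qed
    show "(\<integral>\<^sup>+y. norm (pdf (s n) y) \<partial>lebesgue) \<le> (\<integral>\<^sup>+y. norm (pdf \<theta> y) \<partial>lebesgue)" for n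
      using nn_integral_pdf pdf_nonneg s \<theta> by simp
  qed (use s \<theta> integrable_pdf in auto)
  then have "(\<lambda>n. \<integral>\<^sup>+y. norm (indicator {..x} y * pdf (s n) y - indicator {..x} y * pdf \<theta> y) \<partial>lebesgue)
      \<longlonglongrightarrow> 0"
    by (rule tendsto_sandwich[rotated 2, OF tendsto_const])
      (auto intro!: always_eventually nn_integral_mono split: split_indicator)
  then show "(\<lambda>n. distF I p (s n) x) \<longlonglongrightarrow> distF I p \<theta> x"
    unfolding distF_eq_integral
    by (rule tendsto_L1_int[rotated 2]) (use s \<theta> in \<open>auto intro: integrable_indicator_pdf\<close>)
qed

lemma ex1_vote_measure_iff_limits:
  assumes "is_interval \<Theta>" and "\<Theta> \<noteq> {}" and "x \<in> I"
  shows "(\<exists>!Q. vote_measure \<Theta> (\<lambda>\<theta>. 1 - distF I p \<theta> x) Q) \<longleftrightarrow>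
    (\<not> has_max \<Theta> \<longrightarrow> ((\<lambda>\<theta>. distF I p \<theta> x) \<longlongrightarrow> 0) (to_sup \<Theta>)) \<and>
    (\<not> has_min \<Theta> \<longrightarrow> ((\<lambda>\<theta>. distF I p \<theta> x) \<longlongrightarrow> 1) (to_inf \<Theta>))"
proof -
  have mono: "mono_on \<Theta> (\<lambda>\<theta>. 1 - distF I p \<theta> x)"
    using distF_antimono assms(3) by (auto intro!: mono_onI)
  have bounds: "0 \<le> 1 - distF I p \<theta> x \<and> 1 - distF I p \<theta> x \<le> 1" if "\<theta> \<in> \<Theta>" for \<theta>
    using distF_bounds[OF that] by simp
  have cont: "continuous_on \<Theta> (\<lambda>\<theta>. 1 - distF I p \<theta> x)"
    by (intro continuous_intros continuous_on_distF)
  have "(\<exists>!Q. vote_measure \<Theta> (\<lambda>\<theta>. 1 - distF I p \<theta> x) Q) \<longleftrightarrow>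
    (\<not> has_max \<Theta> \<longrightarrow> ((\<lambda>\<theta>. 1 - distF I p \<theta> x) \<longlongrightarrow> 1) (to_sup \<Theta>)) \<and>
    (\<not> has_min \<Theta> \<longrightarrow> ((\<lambda>\<theta>. 1 - distF I p \<theta> x) \<longlongrightarrow> 0) (to_inf \<Theta>))"
    by (rule ex1_vote_measure_iff[OF assms(1,2) mono bounds cont])
  then show ?thesis
    using tendsto_one_minus_iff[of "\<lambda>\<theta>. distF I p \<theta> x" 0] tendsto_one_minus_iff[of "\<lambda>\<theta>. distF I p \<theta> x" 1]
    by simp
qed

end

theorem proposition4p2:
  fixes I \<Theta> :: "real set" and p :: "real \<Rightarrow> real \<Rightarrow> real"
  assumes I_int: "is_interval I"
    and Theta_int: "is_interval \<Theta>" and Theta_ne: "\<Theta> \<noteq> {}"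
    and pos: "\<And>\<theta> x. \<theta> \<in> \<Theta> \<Longrightarrow> x \<in> I \<Longrightarrow> p \<theta> x > 0"
    and meas: "\<And>\<theta>. \<theta> \<in> \<Theta> \<Longrightarrow> set_borel_measurable lebesgue I (p \<theta>)"
    and dens: "\<And>\<theta>. \<theta> \<in> \<Theta> \<Longrightarrow> (\<integral>\<^sup>+ x\<in>I. ennreal (p \<theta> x) \<partial>lebesgue) = 1"
    and cont: "\<And>x. x \<in> I \<Longrightarrow> continuous_on \<Theta> (\<lambda>\<theta>. p \<theta> x)"
    and mlr: "\<And>\<theta>1 \<theta>2. \<theta>1 \<in> \<Theta> \<Longrightarrow> \<theta>2 \<in> \<Theta> \<Longrightarrow> \<theta>1 < \<theta>2 \<Longrightarrow>
                strict_mono_on I (\<lambda>x. p \<theta>2 x / p \<theta>1 x)"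
  shows "votes_compatible I \<Theta> (distF I p) \<longleftrightarrow>
    (AE x in lebesgue. x \<in> I \<longrightarrow>
       (\<not> has_max \<Theta> \<longrightarrow> ((\<lambda>\<theta>. distF I p \<theta> x) \<longlongrightarrow> 0) (to_sup \<Theta>)) \<and>
       (\<not> has_min \<Theta> \<longrightarrow> ((\<lambda>\<theta>. distF I p \<theta> x) \<longlongrightarrow> 1) (to_inf \<Theta>)))"
proof -
  interpret strict_mlr_family I \<Theta> p
    using pos meas dens cont mlr by unfold_locales
  show ?thesis
    unfolding votes_compatible_iff_vote_measure
    using ex1_vote_measure_iff_limits[OF Theta_int Theta_ne] by (intro AE_cong) blast
qed

end
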